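(* Let $I=(G,T,k)$, $G=(V,E)$, be a Node Multiway Cut instance satisfying: (R1) no two terminals are adjacent and $p(I)\ge 0$; (R2) no vertex of $V\setminus T$ is adjacent to two distinct terminals; (R3) for every terminal $t\in T$ and every neighbour $w\in V\setminus T$ of $t$, the optimum value of the LP-relaxation of $I$ with the additional constraint $d_w=0$ is strictly larger than $LP(I)$. Then: (1) the assignment $d_v=1/2$ for $v\in N(T)$ and $d_v=0$ for $v\in V\setminus (T\cup N(T))$ is an optimal solution to the LP-relaxation of $I$; (2) for every terminal $t\in T$, the set $N(t)$ is the unique minimum separating cut of $t$.
   Context: A Node Multiway Cut instance $I=(G,T,k)$ consists of a simple undirected graph $G=(V,E)$, a set $T\subseteq V$ of terminals and an integer $k$; it is a YES-instance iff there is a set $X\subseteq V\setminus T$ with $|X|\le k$ such that every path in $G$ between two distinct terminals contains a vertex of $X$. Let $\mathcal P(I)$ be the set of all simple paths in $G$ connecting two distinct terminals. The LP-relaxation of $I$ is: minimize $\sum_{v\in V\setminus T} d_v$ subject to $\sum_{v\in V(P)\setminus T} d_v\ge 1$ for every $P\in\mathcal P(I)$ and $d_v\ge 0$ for all $v\in V\setminus T$. $LP(I)$ denotes its optimum value and $p(I)=k-LP(I)$. $N(v)$ is the set of neighbours of $v$, $N(S)=\bigcup_{v\in S}N(v)\setminus S$. For $t\in T$, a separating cut of $t$ is a set $S\subseteq V\setminus T$ such that $t$ is disconnected from $T\setminus\{t\}$ in $G-S$. *)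

theory Defs
  imports Complex_Main
begin

definition simple_graph :: "'a set \<Rightarrow> ('a \<Rightarrow> 'a \<Rightarrow> bool) \<Rightarrow> bool" where
  "simple_graph V E \<longleftrightarrow> finite V \<and> (\<forall>u v. E u v \<longrightarrow> E v u) \<and> (\<forall>v. \<not> E v v)
     \<and> (\<forall>u v. E u v \<longrightarrow> u \<in> V \<and> v \<in> V)"

definition nbr :: "('a \<Rightarrow> 'a \<Rightarrow> bool) \<Rightarrow> 'a \<Rightarrow> 'a set" where
  "nbr E v = {u. E v u}"

definition nbr_set :: "('a \<Rightarrow> 'a \<Rightarrow> bool) \<Rightarrow> 'a set \<Rightarrow> 'a set" where
  "nbr_set E S = (\<Union>v\<in>S. nbr E v) - S"

definition term_paths :: "'a set \<Rightarrow> ('a \<Rightarrow> 'a \<Rightarrow> bool) \<Rightarrow> 'a set \<Rightarrow> 'a list set" where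
  "term_paths V E T = {xs. distinct xs \<and> xs \<noteq> [] \<and> set xs \<subseteq> V
      \<and> (\<forall>i. Suc i < length xs \<longrightarrow> E (xs ! i) (xs ! Suc i))
      \<and> hd xs \<in> T \<and> last xs \<in> T \<and> hd xs \<noteq> last xs}"

text \<open>Feasible solutions of the LP relaxation, with the additional constraints
  d_z = 0 for z in Z (Z = {} gives the plain LP relaxation).  Only the values of
  d on V - T matter.\<close>
definition lp_feasible :: "'a set \<Rightarrow> ('a \<Rightarrow> 'a \<Rightarrow> bool) \<Rightarrow> 'a set \<Rightarrow> 'a set \<Rightarrow> ('a \<Rightarrow> real) \<Rightarrow> bool" where
  "lp_feasible V E T Z d \<longleftrightarrow> (\<forall>v\<in>V - T. d v \<ge> 0)
     \<and> (\<forall>P\<in>term_paths V E T. (\<Sum>v\<in>set P - T. d v) \<ge> 1)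
     \<and> (\<forall>z\<in>Z. d z = 0)"

definition lp_obj :: "'a set \<Rightarrow> 'a set \<Rightarrow> ('a \<Rightarrow> real) \<Rightarrow> real" where
  "lp_obj V T d = (\<Sum>v\<in>V - T. d v)"

definition lp_val :: "'a set \<Rightarrow> ('a \<Rightarrow> 'a \<Rightarrow> bool) \<Rightarrow> 'a set \<Rightarrow> 'a set \<Rightarrow> real" where
  "lp_val V E T Z = Inf {lp_obj V T d | d. lp_feasible V E T Z d}"

definition LP :: "'a set \<Rightarrow> ('a \<Rightarrow> 'a \<Rightarrow> bool) \<Rightarrow> 'a set \<Rightarrow> real" where
  "LP V E T = lp_val V E T {}"

definition lp_optimal :: "'a set \<Rightarrow> ('a \<Rightarrow> 'a \<Rightarrow> bool) \<Rightarrow> 'a set \<Rightarrow> ('a \<Rightarrow> real) \<Rightarrow> bool" where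
  "lp_optimal V E T d \<longleftrightarrow> lp_feasible V E T {} d \<and> lp_obj V T d = LP V E T"

definition pI :: "'a set \<Rightarrow> ('a \<Rightarrow> 'a \<Rightarrow> bool) \<Rightarrow> 'a set \<Rightarrow> int \<Rightarrow> real" where
  "pI V E T k = real_of_int k - LP V E T"

definition connected_in :: "'a set \<Rightarrow> ('a \<Rightarrow> 'a \<Rightarrow> bool) \<Rightarrow> 'a set \<Rightarrow> 'a \<Rightarrow> 'a \<Rightarrow> bool" where
  "connected_in V E S u v \<longleftrightarrow> u \<in> V - S \<and> v \<in> V - S \<and>
     (\<lambda>x y. E x y \<and> x \<in> V - S \<and> y \<in> V - S)\<^sup>*\<^sup>* u v"

definition separating_cut :: "'a set \<Rightarrow> ('a \<Rightarrow> 'a \<Rightarrow> bool) \<Rightarrow> 'a set \<Rightarrow> 'a \<Rightarrow> 'a set \<Rightarrow> bool" where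
  "separating_cut V E T t S \<longleftrightarrow> S \<subseteq> V - T \<and>
     (\<forall>t'\<in>T - {t}. \<not> connected_in V E S t t')"

definition unique_min_separating_cut :: "'a set \<Rightarrow> ('a \<Rightarrow> 'a \<Rightarrow> bool) \<Rightarrow> 'a set \<Rightarrow> 'a \<Rightarrow> 'a set \<Rightarrow> bool" where
  "unique_min_separating_cut V E T t S \<longleftrightarrow> separating_cut V E T t S \<and>
     (\<forall>S'. separating_cut V E T t S' \<and> card S' \<le> card S \<longrightarrow> S' = S)"

end

theory Submission
  imports Defs "HOL-Analysis.Analysis"
begin

text \<open>
  The proof rests on the half-integrality of the LP relaxation (Garg, Vazirani and Yannakakis):
  every feasible solution \<open>d\<close> can be rounded, by cutting balls of a common radius
  \<open>r \<in> (0, 1/2]\<close> around the terminals in the metric induced by \<open>d\<close>, to a half-integral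
  feasible solution that is no more expensive; averaging over \<open>r\<close> (a Lebesgue integral)
  shows that a good radius exists. Hence the LP optimum is attained by a half-integral solution.

  On an instance satisfying (R1) and (R2), weight \<open>1/2\<close> on \<open>N(T)\<close> is feasible. By (R3)
  every optimal solution is positive on \<open>N(T)\<close>, so a half-integral optimum has value
  \<open>\<ge> |N(T)|/2\<close>, proving part (1). For part (2), a separating cut \<open>S \<noteq> N(t)\<close> with
  \<open>|S| \<le> |N(t)|\<close> would give the optimal solution \<open>1/2\<close> on \<open>S\<close> and on the neighbours of the
  other terminals, which vanishes at some vertex of \<open>N(t)\<close>, contradicting (R3).
\<close>

lemma term_paths_iff:
  "P \<in> term_paths V E T \<longleftrightarrow> distinct P \<and> P \<noteq> [] \<and> set P \<subseteq> V \<and> successively E P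
     \<and> hd P \<in> T \<and> last P \<in> T \<and> hd P \<noteq> last P"
  unfolding term_paths_def successively_conv_nth by blast

lemma term_path_second_vertex:
  assumes "P \<in> term_paths V E T"
  shows "\<exists>x\<in>set P. E (hd P) x"
proof -
  have P: "P \<noteq> []" "successively E P" "hd P \<noteq> last P" using assms by (auto simp: term_paths_iff)
  then obtain a b ys where "P = a # b # ys" by (cases P; cases "tl P") auto
  then show ?thesis using P by auto
qed

lemma successively_lazy_distinct:
  "successively (\<lambda>x y. E x y \<or> x = y) P \<Longrightarrow> distinct P \<Longrightarrow> successively E P"
  by (induction P rule: induct_list012) auto

lemma successively_rtranclp:
  "P \<noteq> [] \<Longrightarrow> successively E P \<Longrightarrow> set P \<subseteq> B
     \<Longrightarrow> (\<lambda>x y. E x y \<and> x \<in> B \<and> y \<in> B)\<^sup>*\<^sup>* (hd P) (last P)"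
  by (induction P rule: induct_list012) (auto intro: converse_rtranclp_into_rtranclp)

lemma successively_exit:
  assumes "successively R P" "P \<noteq> []" "hd P \<in> A" "last P \<notin> A"
  shows "\<exists>u\<in>A. \<exists>v\<in>set P. v \<notin> A \<and> R u v"
  using assms
proof (induction P rule: induct_list012)
  case (3 x y ys)
  then show ?case by (cases "y \<in> A") auto
qed auto

lemma successively_rev_sym:
  "successively R xs \<Longrightarrow> (\<And>x y. R x y \<Longrightarrow> R y x) \<Longrightarrow> successively R (rev xs)"
  by (simp add: successively_mono)

text \<open>Lazy walks from \<open>a\<close> to \<open>b\<close>: consecutive vertices are equal or adjacent. Allowing
  repeated vertices makes walks closed under extension and concatenation.\<close>
definition walks :: "'a set \<Rightarrow> ('a \<Rightarrow> 'a \<Rightarrow> bool) \<Rightarrow> 'a \<Rightarrow> 'a \<Rightarrow> 'a list set" where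
  "walks V E a b = {W. W \<noteq> [] \<and> set W \<subseteq> V \<and> successively (\<lambda>x y. E x y \<or> x = y) W
     \<and> hd W = a \<and> last W = b}"

text \<open>Cutting out cycles turns every walk into a repetition-free one on a subset of its vertices.\<close>
lemma walk_to_path:
  "W \<in> walks V E a b \<Longrightarrow> \<exists>P \<in> walks V E a b. distinct P \<and> set P \<subseteq> set W"
proof (induction "length W" arbitrary: W rule: less_induct)
  case less
  show ?case
  proof (cases "distinct W")
    case False
    then obtain xs ys zs y where W: "W = xs @ [y] @ ys @ [y] @ zs"
      using not_distinct_decomp by blast
    let ?R = "\<lambda>x y. E x y \<or> x = y"
    have "successively ?R ((xs @ [y]) @ (ys @ [y] @ zs))" "successively ?R ((xs @ [y] @ ys) @ (y # zs))"
      using less(2) W by (simp_all add: walks_def)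
    then have "successively ?R (xs @ [y])" "successively ?R (y # zs)"
      unfolding successively_append_iff by blast+
    then have "successively ?R ((xs @ [y]) @ zs)"
      by (auto simp: successively_append_iff successively_Cons)
    then have "xs @ [y] @ zs \<in> walks V E a b"
      using less(2) unfolding W walks_def by (auto simp: hd_append last_append split: if_splits)
    moreover have "length (xs @ [y] @ zs) < length W" using W by simp
    ultimately show ?thesis using less(1) W by fastforce
  qed (use less in auto)
qed

lemma lp_val_le:
  assumes "lp_feasible V E T Z f"
  shows "lp_val V E T Z \<le> lp_obj V T f"
  unfolding lp_val_def
proof (rule cInf_lower)
  show "lp_obj V T f \<in> {lp_obj V T d |d. lp_feasible V E T Z d}" using assms by blast
  show "bdd_below {lp_obj V T d |d. lp_feasible V E T Z d}"
    by (rule bdd_belowI[of _ 0]) (auto simp: lp_obj_def lp_feasible_def intro!: sum_nonneg)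
qed

lemma lp_val_eqI:
  assumes "lp_feasible V E T Z f" "\<And>d. lp_feasible V E T Z d \<Longrightarrow> lp_obj V T f \<le> lp_obj V T d"
  shows "lp_val V E T Z = lp_obj V T f"
proof (rule antisym)
  show "lp_val V E T Z \<le> lp_obj V T f" by (rule lp_val_le[OF assms(1)])
  show "lp_obj V T f \<le> lp_val V E T Z"
    unfolding lp_val_def by (rule cInf_greatest) (use assms in auto)
qed

lemma sum_ge_one_two_points:
  fixes f :: "'a \<Rightarrow> real"
  assumes "finite A" "\<And>v. v \<in> A \<Longrightarrow> 0 \<le> f v" "x \<in> A" "y \<in> A"
    and "x = y \<Longrightarrow> 1 \<le> f x" "x \<noteq> y \<Longrightarrow> 1 \<le> f x + f y"
  shows "1 \<le> sum f A"
proof (cases "x = y")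
  case True
  have "f x \<le> sum f A" by (rule member_le_sum) (use assms in auto)
  then show ?thesis using assms True by simp
next
  case False
  have "f x + f y = sum f {x, y}" using False by simp
  also have "\<dots> \<le> sum f A" by (rule sum_mono2) (use assms in auto)
  finally show ?thesis using assms False by simp
qed

lemma not_superset_if_card_le:
  assumes "finite S" "S \<noteq> A" "card S \<le> card A"
  shows "\<exists>w\<in>A. w \<notin> S"
proof (rule ccontr)
  assume "\<not> (\<exists>w\<in>A. w \<notin> S)"
  then have sub: "A \<subseteq> S" by blast
  then have "card A = card S" using card_mono[OF assms(1) sub] assms(3) by simp
  then show False using card_subset_eq[OF assms(1) sub] assms(2) by simp
qed

definition half_integral :: "'a set \<Rightarrow> 'a set \<Rightarrow> ('a \<Rightarrow> real) \<Rightarrow> bool" where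
  "half_integral V T f \<longleftrightarrow> (\<forall>x. (x \<in> V - T \<longrightarrow> f x \<in> {0, 1/2, 1}) \<and> (x \<notin> V - T \<longrightarrow> f x = 0))"

lemma finite_half_integral: "finite V \<Longrightarrow> finite {f. half_integral V T f}"
  unfolding half_integral_def by (rule finite_set_of_finite_funs) auto

lemma nn_integral_indicator_pairs:
  assumes "\<And>v. v \<in> A \<Longrightarrow> S1 v \<in> sets lborel" "\<And>v. v \<in> A \<Longrightarrow> S2 v \<in> sets lborel"
  shows "(\<integral>\<^sup>+ r. (\<Sum>v\<in>A. indicator (S1 v) r + indicator (S2 v) r) \<partial>lborel)
    = (\<Sum>v\<in>A. emeasure lborel (S1 v) + emeasure lborel (S2 v))"
proof -
  have "(\<integral>\<^sup>+ r. (\<Sum>v\<in>A. indicator (S1 v) r + indicator (S2 v) r) \<partial>lborel)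
      = (\<Sum>v\<in>A. (\<integral>\<^sup>+ r. indicator (S1 v) r + indicator (S2 v) r \<partial>lborel))"
    by (rule nn_integral_sum) (use assms in auto)
  also have "\<dots> = (\<Sum>v\<in>A. emeasure lborel (S1 v) + emeasure lborel (S2 v))"
    by (rule sum.cong) (use assms in \<open>auto simp: nn_integral_add\<close>)
  finally show ?thesis .
qed

lemma ennreal_le_indicator_sum:
  assumes "c \<le> (\<Sum>v\<in>A. indicator (S1 v) r + indicator (S2 v) r :: real)"
  shows "ennreal c \<le> (\<Sum>v\<in>A. indicator (S1 v) r + indicator (S2 v) r)"
proof -
  have "ennreal c \<le> ennreal (\<Sum>v\<in>A. indicator (S1 v) r + indicator (S2 v) r)"
    using assms by (rule ennreal_leI)
  also have "\<dots> = (\<Sum>v\<in>A. ennreal (indicator (S1 v) r + indicator (S2 v) r))"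
    by (rule sum_ennreal[symmetric]) simp
  finally show ?thesis by (simp add: ennreal_plus ennreal_indicator)
qed

text \<open>Averaging over a random threshold \<open>r \<in> (0, 1/2]\<close>: if for every \<open>v\<close> the function
  \<open>r \<mapsto> 2 g r v\<close> is dominated by the indicators of two sets of total length at most \<open>c v\<close>, then
  integrating over \<open>(0, 1/2]\<close> shows that the least value of \<open>\<Sum>v. g r v\<close> is at most \<open>\<Sum>v. c v\<close>.\<close>
lemma threshold_averaging:
  fixes g :: "real \<Rightarrow> 'v \<Rightarrow> real" and c :: "'v \<Rightarrow> real"
  assumes fin_vals: "finite ((\<lambda>r. \<Sum>v\<in>A. g r v) ` {0<..1/2})"
    and g_nn: "\<And>r v. v \<in> A \<Longrightarrow> 0 \<le> g r v"
    and c_nn: "\<And>v. v \<in> A \<Longrightarrow> 0 \<le> c v"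
    and cover: "\<And>v. v \<in> A \<Longrightarrow> \<exists>S1 S2. S1 \<in> sets lborel \<and> S2 \<in> sets lborel
       \<and> (\<forall>r\<in>{0<..1/2}. 2 * g r v \<le> indicator S1 r + indicator S2 r)
       \<and> emeasure lborel S1 + emeasure lborel S2 \<le> ennreal (c v)"
  shows "\<exists>r\<in>{0<..1/2}. (\<Sum>v\<in>A. g r v) \<le> (\<Sum>v\<in>A. c v)"
proof -
  let ?I = "{0<..1/2::real}"
  obtain S1 S2 where S1_meas: "\<And>v. v \<in> A \<Longrightarrow> S1 v \<in> sets lborel"
    and S2_meas: "\<And>v. v \<in> A \<Longrightarrow> S2 v \<in> sets lborel"
    and S_cover: "\<And>v r. v \<in> A \<Longrightarrow> r \<in> ?I \<Longrightarrow> 2 * g r v \<le> indicator (S1 v) r + indicator (S2 v) r"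
    and S_small: "\<And>v. v \<in> A \<Longrightarrow> emeasure lborel (S1 v) + emeasure lborel (S2 v) \<le> ennreal (c v)"
    using cover by metis
  have "(1/2::real) \<in> ?I" by simp
  then obtain r0 where r0: "r0 \<in> ?I" and r0_min: "\<And>r. r \<in> ?I \<Longrightarrow> (\<Sum>v\<in>A. g r0 v) \<le> (\<Sum>v\<in>A. g r v)"
    using ex_min_if_finite[OF fin_vals] by (fastforce simp: not_less)
  define m where "m = (\<Sum>v\<in>A. g r0 v)"
  have m_nn: "0 \<le> m" unfolding m_def by (rule sum_nonneg) (rule g_nn)
  have I_measure: "emeasure lborel ?I = ennreal (1/2)" by simp
  have "ennreal m = ennreal (2 * m) * emeasure lborel ?I"
    unfolding I_measure using m_nn by (subst ennreal_mult[symmetric]) auto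
  also have "\<dots> = (\<integral>\<^sup>+ r. ennreal (2 * m) * indicator ?I r \<partial>lborel)"
    by (simp add: nn_integral_cmult_indicator)
  also have "\<dots> \<le> (\<integral>\<^sup>+ r. (\<Sum>v\<in>A. indicator (S1 v) r + indicator (S2 v) r) \<partial>lborel)"
  proof (rule nn_integral_mono)
    fix r :: real
    show "ennreal (2 * m) * indicator ?I r \<le> (\<Sum>v\<in>A. indicator (S1 v) r + indicator (S2 v) r)"
    proof (cases "r \<in> ?I")
      case True
      have "2 * m \<le> (\<Sum>v\<in>A. 2 * g r v)"
        using r0_min[OF True] by (simp add: m_def sum_distrib_left[symmetric])
      also have "\<dots> \<le> (\<Sum>v\<in>A. indicator (S1 v) r + indicator (S2 v) r)"
        using S_cover True by (intro sum_mono) blast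
      finally show ?thesis using True by (simp add: ennreal_le_indicator_sum)
    qed simp
  qed
  also have "\<dots> = (\<Sum>v\<in>A. emeasure lborel (S1 v) + emeasure lborel (S2 v))"
    using S1_meas S2_meas by (rule nn_integral_indicator_pairs)
  also have "\<dots> \<le> (\<Sum>v\<in>A. ennreal (c v))"
    using S_small by (rule sum_mono)
  also have "\<dots> = ennreal (\<Sum>v\<in>A. c v)"
    using c_nn by simp
  finally have "m \<le> (\<Sum>v\<in>A. c v)"
    using c_nn by (simp add: sum_nonneg)
  then show ?thesis using r0 m_def by blast
qed

locale mwc_graph =
  fixes V :: "'a set" and E :: "'a \<Rightarrow> 'a \<Rightarrow> bool" and T :: "'a set"
  assumes graph: "simple_graph V E" and terminals_in_V: "T \<subseteq> V"
begin

lemma finite_V: "finite V" using graph by (simp add: simple_graph_def)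
lemma E_sym: "E x y \<Longrightarrow> E y x" using graph by (simp add: simple_graph_def)
lemma E_in_V: "E x y \<Longrightarrow> x \<in> V \<and> y \<in> V" using graph by (simp add: simple_graph_def)
lemma finite_T: "finite T" using finite_V terminals_in_V finite_subset by blast

lemma term_paths_rev: "P \<in> term_paths V E T \<Longrightarrow> rev P \<in> term_paths V E T"
  using successively_rev_sym[of E P] E_sym by (auto simp: term_paths_iff hd_rev last_rev)

lemma walk_single: "a \<in> V \<Longrightarrow> [a] \<in> walks V E a a"
  by (simp add: walks_def)

lemma walk_snoc: "W \<in> walks V E a u \<Longrightarrow> E u v \<Longrightarrow> W @ [v] \<in> walks V E a v"
  using E_in_V[of u v] by (auto simp: walks_def successively_append_iff)

lemma walk_join: "W \<in> walks V E a v \<Longrightarrow> W' \<in> walks V E b v \<Longrightarrow> W @ rev W' \<in> walks V E a b"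
proof -
  assume W: "W \<in> walks V E a v" and W': "W' \<in> walks V E b v"
  have "successively (\<lambda>x y. E x y \<or> x = y) (rev W')"
    using W' E_sym by (intro successively_rev_sym) (auto simp: walks_def)
  then show ?thesis
    using W W' by (auto simp: walks_def successively_append_iff hd_rev last_rev)
qed

lemma walk_term_path:
  assumes "a \<in> T" "b \<in> T" "a \<noteq> b" "W \<in> walks V E a b"
  obtains P where "P \<in> term_paths V E T" "set P \<subseteq> set W"
proof -
  obtain P where P: "P \<in> walks V E a b" "distinct P" "set P \<subseteq> set W"
    using walk_to_path[OF assms(4)] by blast
  have walk: "P \<noteq> []" "set P \<subseteq> V" "successively (\<lambda>x y. E x y \<or> x = y) P" "hd P = a" "last P = b"
    using P(1) by (simp_all add: walks_def)
  have "successively E P" using successively_lazy_distinct[OF walk(3) P(2)] .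
  then have "P \<in> term_paths V E T" using assms(1-3) P(2) walk by (simp add: term_paths_iff)
  then show thesis using P(3) that by blast
qed

lemma separating_cut_meets_path:
  assumes "separating_cut V E T t S" "P \<in> term_paths V E T" "hd P = t"
  shows "set P \<inter> S \<noteq> {}"
proof
  assume avoid: "set P \<inter> S = {}"
  have P: "P \<noteq> []" "successively E P" "set P \<subseteq> V" "last P \<in> T - {t}"
    using assms(2,3) by (auto simp: term_paths_iff)
  let ?R = "\<lambda>x y. E x y \<and> x \<in> V - S \<and> y \<in> V - S"
  have "set P \<subseteq> V - S" using avoid P(3) by auto
  with P(1,2) have "?R\<^sup>*\<^sup>* (hd P) (last P)"
    by (rule successively_rtranclp)
  moreover have "hd P \<in> V - S" "last P \<in> V - S"
    using \<open>set P \<subseteq> V - S\<close> hd_in_set[OF P(1)] last_in_set[OF P(1)] by auto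
  ultimately have "connected_in V E S t (last P)" using assms(3) by (simp add: connected_in_def)
  then show False using assms(1) P(4) by (simp add: separating_cut_def)
qed

end

text \<open>Measuring a walk by
  the \<open>d\<close>-weight of its non-terminal vertices, any two terminals are at distance \<open>\<ge> 1\<close>. For a
  radius \<open>r \<in> (0, 1/2]\<close>, the rounded solution puts weight \<open>1/2\<close> on each non-terminal on
  the border of the radius-\<open>r\<close> region of one terminal and weight 1 if it lies on the border of
  two regions; it is feasible and half-integral, and averaging over \<open>r\<close> shows that some
  radius makes it no more expensive than \<open>d\<close>.\<close>
locale lp_solution = mwc_graph +
  fixes d :: "'a \<Rightarrow> real"
  assumes feasible: "lp_feasible V E T {} d"
begin

lemma d_nonneg: "v \<in> V - T \<Longrightarrow> 0 \<le> d v"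
  using feasible by (simp add: lp_feasible_def)

definition cost :: "'a set \<Rightarrow> real" where
  "cost S = (\<Sum>x\<in>S - T. d x)"

lemma cost_mono: "S \<subseteq> S' \<Longrightarrow> S' \<subseteq> V \<Longrightarrow> cost S \<le> cost S'"
  unfolding cost_def by (rule sum_mono2) (auto intro: finite_subset[OF _ finite_V] d_nonneg)

lemma cost_ge: "S \<subseteq> V \<Longrightarrow> v \<in> S - T \<Longrightarrow> d v \<le> cost S"
  unfolding cost_def by (rule member_le_sum) (auto intro: finite_subset[OF _ finite_V] d_nonneg)

lemma cost_insert_terminal: "v \<in> T \<Longrightarrow> cost (insert v S) = cost S"
  unfolding cost_def by (simp add: insert_Diff_if)

lemma cost_insert: "S \<subseteq> V \<Longrightarrow> v \<in> V - T \<Longrightarrow> cost (insert v S) \<le> cost S + d v"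
  using d_nonneg[of v] finite_subset[OF _ finite_V, of S]
  by (cases "v \<in> S") (auto simp: cost_def insert_absorb insert_Diff_if)

lemma walk_cost:
  assumes "a \<in> T" "b \<in> T" "a \<noteq> b" "W \<in> walks V E a b"
  shows "1 \<le> cost (set W)"
proof -
  obtain P where P: "P \<in> term_paths V E T" "set P \<subseteq> set W"
    using walk_term_path[OF assms] .
  have "1 \<le> cost (set P)" using feasible P(1) unfolding lp_feasible_def cost_def by blast
  also have "\<dots> \<le> cost (set W)" using P(2) assms(4) by (intro cost_mono) (auto simp: walks_def)
  finally show ?thesis .
qed

definition region :: "'a \<Rightarrow> real \<Rightarrow> 'a set" where
  "region t r = {v. \<exists>W \<in> walks V E t v. cost (set W) < r}"

definition border :: "'a \<Rightarrow> real \<Rightarrow> 'a set" where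
  "border t r = {v \<in> V - T. v \<notin> region t r \<and> (\<exists>u \<in> region t r. E u v)}"

definition claims :: "real \<Rightarrow> 'a \<Rightarrow> 'a set" where
  "claims r v = {t \<in> T. v \<in> border t r}"

definition rounded :: "real \<Rightarrow> 'a \<Rightarrow> real" where
  "rounded r v = (if v \<in> V - T then min 1 (real (card (claims r v)) / 2) else 0)"

lemma rounded_half_integral: "half_integral V T (rounded r)"
proof -
  have "min 1 (real n / 2) \<in> {0, 1/2, 1}" for n :: nat
    by (cases n; cases "n - 1") auto
  then show ?thesis by (auto simp: half_integral_def rounded_def)
qed

lemma finite_claims: "finite (claims r v)"
  using finite_T by (simp add: claims_def)

text \<open>A terminal path leaves the region of its start through a non-terminal: its other end is too
  far away, and a terminal reached by a single edge would be too close.\<close>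
lemma term_path_meets_border:
  assumes P: "P \<in> term_paths V E T" and r: "0 < r" "r \<le> 1/2"
  shows "\<exists>x \<in> set P. x \<in> border (hd P) r"
proof -
  let ?a = "hd P" and ?b = "last P"
  have Pp: "P \<noteq> []" "set P \<subseteq> V" "successively E P" "?a \<in> T" "?b \<in> T" "?a \<noteq> ?b"
    using P by (auto simp: term_paths_iff)
  have a_in: "?a \<in> region ?a r"
    unfolding region_def using walk_single[of ?a] Pp(4) terminals_in_V r
    by (intro CollectI bexI[of _ "[?a]"]) (auto simp: cost_def)
  have b_out: "?b \<notin> region ?a r"
    using walk_cost[of ?a ?b] Pp r by (force simp: region_def)
  obtain u x where ux: "u \<in> region ?a r" "x \<in> set P" "x \<notin> region ?a r" "E u x"
    using successively_exit[OF Pp(3) Pp(1) a_in b_out] by blast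
  have "x \<notin> T"
  proof
    assume xT: "x \<in> T"
    obtain W where W: "W \<in> walks V E ?a u" "cost (set W) < r" using ux(1) by (auto simp: region_def)
    have "x \<noteq> ?a" using ux a_in by auto
    then have "1 \<le> cost (set (W @ [x]))" using walk_cost[OF Pp(4) xT _ walk_snoc[OF W(1) ux(4)]] by blast
    then show False using cost_insert_terminal[OF xT] W r by simp
  qed
  then show ?thesis using ux Pp(2) by (auto simp: border_def)
qed

text \<open>Each terminal path meets the borders of both of its end points, hence carries rounded weight
  \<open>\<ge> 1\<close>.\<close>
lemma rounded_feasible:
  assumes r: "0 < r" "r \<le> 1/2"
  shows "lp_feasible V E T {} (rounded r)"
  unfolding lp_feasible_def
proof (intro conjI ballI)
  fix P assume P: "P \<in> term_paths V E T"
  have Pp: "set P \<subseteq> V" "hd P \<in> T" "last P \<in> T" "hd P \<noteq> last P"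
    using P by (auto simp: term_paths_iff)
  obtain x where x: "x \<in> set P" "x \<in> border (hd P) r"
    using term_path_meets_border[OF P r] by blast
  obtain y where y: "y \<in> set P" "y \<in> border (last P) r"
    using term_path_meets_border[OF term_paths_rev[OF P] r] by (auto simp: hd_rev)
  have xy: "x \<in> set P - T" "y \<in> set P - T" using x y by (auto simp: border_def)
  have "hd P \<in> claims r x" "last P \<in> claims r y" using x y Pp by (auto simp: claims_def)
  then have "1 \<le> card (claims r x)" "1 \<le> card (claims r y)"
    using finite_claims by (auto simp: Suc_le_eq card_gt_0_iff)
  then have half: "1/2 \<le> rounded r x" "1/2 \<le> rounded r y"
    using xy Pp(1) by (auto simp: rounded_def)
  have double: "1 \<le> rounded r x" if "x = y"
  proof -
    have "{hd P, last P} \<subseteq> claims r x" using x y Pp that by (auto simp: claims_def)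
    then have "card {hd P, last P} \<le> card (claims r x)" by (rule card_mono[OF finite_claims])
    then have "2 \<le> card (claims r x)" using Pp(4) by simp
    then show ?thesis using xy Pp(1) by (auto simp: rounded_def)
  qed
  show "1 \<le> (\<Sum>v\<in>set P - T. rounded r v)"
  proof (rule sum_ge_one_two_points[OF _ _ xy])
    show "1 \<le> rounded r x + rounded r y" using half by simp
  qed (use double in \<open>simp_all add: rounded_def\<close>)
qed (simp_all add: rounded_def)

text \<open>Weighted distance from a terminal, including the weight of the end vertex.\<close>
definition tdist :: "'a \<Rightarrow> 'a \<Rightarrow> real" where
  "tdist t v = Min ((\<lambda>W. cost (set W)) ` walks V E t v)"

lemma finite_walk_costs: "finite ((\<lambda>W. cost (set W)) ` walks V E t v)"
proof (rule finite_subset)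
  show "(\<lambda>W. cost (set W)) ` walks V E t v \<subseteq> cost ` Pow V" by (auto simp: walks_def)
qed (use finite_V in simp)

lemma tdist_le: "W \<in> walks V E t v \<Longrightarrow> tdist t v \<le> cost (set W)"
  unfolding tdist_def by (rule Min_le[OF finite_walk_costs]) simp

lemma tdist_attained:
  assumes "walks V E t v \<noteq> {}"
  obtains W where "W \<in> walks V E t v" "cost (set W) = tdist t v"
proof -
  have "tdist t v \<in> (\<lambda>W. cost (set W)) ` walks V E t v"
    unfolding tdist_def using assms by (intro Min_in finite_walk_costs) simp
  then show thesis using that by force
qed

lemma claims_tdist:
  assumes "t \<in> claims r v"
  shows "walks V E t v \<noteq> {}" "tdist t v - d v < r" "r \<le> tdist t v"
proof -
  have v: "v \<in> V - T" "v \<notin> region t r" and "\<exists>u \<in> region t r. E u v"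
    using assms by (auto simp: claims_def border_def)
  then obtain u W where W: "W \<in> walks V E t u" "cost (set W) < r" "E u v"
    by (auto simp: region_def)
  have W': "W @ [v] \<in> walks V E t v" by (rule walk_snoc[OF W(1) W(3)])
  then show ne: "walks V E t v \<noteq> {}" by blast
  have "cost (set (W @ [v])) \<le> cost (set W) + d v"
    using cost_insert[of "set W" v] v W(1) by (simp add: walks_def)
  then show "tdist t v - d v < r" using tdist_le[OF W'] W(2) by simp
  obtain W0 where "W0 \<in> walks V E t v" "cost (set W0) = tdist t v" using tdist_attained[OF ne] .
  then show "r \<le> tdist t v" using v(2) unfolding region_def by force
qed

lemma weight_le_tdist:
  assumes v: "v \<in> V - T" and ne: "walks V E t v \<noteq> {}"
  shows "d v \<le> tdist t v"
proof -
  obtain W where W: "W \<in> walks V E t v" "cost (set W) = tdist t v" using tdist_attained[OF ne] .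
  have "v \<in> set W" using W(1) by (auto simp: walks_def)
  then have "d v \<le> cost (set W)" using v W(1) by (intro cost_ge) (auto simp: walks_def)
  then show ?thesis using W by simp
qed

text \<open>Joining shortest walks from two terminals: the shared end vertex is counted twice.\<close>
lemma tdist_two_terminals:
  assumes v: "v \<in> V - T" and t: "t \<in> T" "t' \<in> T" "t \<noteq> t'"
    and ne: "walks V E t v \<noteq> {}" "walks V E t' v \<noteq> {}"
  shows "1 \<le> tdist t v + tdist t' v - d v"
proof -
  obtain W where W: "W \<in> walks V E t v" "cost (set W) = tdist t v" using tdist_attained[OF ne(1)] .
  obtain W' where W': "W' \<in> walks V E t' v" "cost (set W') = tdist t' v" using tdist_attained[OF ne(2)] .
  let ?A = "set W" and ?B = "set W'"
  have "1 \<le> cost (set (W @ rev W'))" by (rule walk_cost[OF t walk_join[OF W(1) W'(1)]])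
  moreover have "cost (?A \<union> ?B) + cost (?A \<inter> ?B) = cost ?A + cost ?B"
  proof -
    have "(?A \<union> ?B) - T = (?A - T) \<union> (?B - T)" "(?A \<inter> ?B) - T = (?A - T) \<inter> (?B - T)" by auto
    then show ?thesis unfolding cost_def by (simp add: sum.union_inter)
  qed
  moreover have "v \<in> ?A \<inter> ?B" "?A \<inter> ?B \<subseteq> V"
    using W(1) W'(1) by (auto simp: walks_def dest: last_in_set)
  then have "d v \<le> cost (?A \<inter> ?B)" using v by (intro cost_ge) auto
  ultimately show ?thesis using W W' by simp
qed

text \<open>For a non-terminal \<open>v\<close> with nearest terminal \<open>t1\<close>, the radii at which \<open>v\<close> is claimed
  once lie in a window of length \<open>\<le> d v\<close> starting at \<open>a\<close>; radii at which it is claimed twice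
  lie in both that window and a second one starting at \<open>b\<close>.\<close>
lemma claims_window:
  assumes v: "v \<in> V - T" and t1: "t1 \<in> T" "walks V E t1 v \<noteq> {}"
    and t1_min: "\<And>t. t \<in> T \<Longrightarrow> walks V E t v \<noteq> {} \<Longrightarrow> tdist t1 v \<le> tdist t v"
    and r: "0 < r" "r \<le> 1/2"
    and a_eq: "a = tdist t1 v - d v" and b_eq: "b = max a (1 - d v - a)"
  shows "2 * rounded r v
     \<le> indicator {a<..max a (min (a + d v) (1/2))} r + indicator {b<..max b (1/2)} r"
proof (cases "\<exists>t \<in> claims r v. t \<noteq> t1")
  case True
  then obtain t where t: "t \<in> claims r v" "t \<noteq> t1" by blast
  note t_dist = claims_tdist[OF t(1)]
  have tT: "t \<in> T" using t(1) by (simp add: claims_def)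
  have sep: "1 \<le> tdist t1 v + tdist t v - d v"
    by (rule tdist_two_terminals[OF v t1(1) tT t(2)[symmetric] t1(2) t_dist(1)])
  have closer: "tdist t1 v \<le> tdist t v" by (rule t1_min[OF tT t_dist(1)])
  have "a < r" "r \<le> a + d v" "1 - d v - a < r"
    using sep closer t_dist(2,3) r unfolding a_eq by linarith+
  then have "r \<in> {a<..max a (min (a + d v) (1/2))}" "r \<in> {b<..max b (1/2)}"
    using r unfolding b_eq by (simp_all add: le_max_iff_disj)
  moreover have "rounded r v \<le> 1" by (simp add: rounded_def)
  ultimately show ?thesis by simp
next
  case False
  then have "claims r v \<subseteq> {t1}" by blast
  then consider "claims r v = {}" | "claims r v = {t1}" by blast
  then show ?thesis
  proof cases
    case 2
    then have "t1 \<in> claims r v" by simp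
    note t1_dist = claims_tdist[OF this]
    have "a < r" "r \<le> a + d v" using t1_dist(2,3) unfolding a_eq by linarith+
    then have "r \<in> {a<..max a (min (a + d v) (1/2))}"
      using r by (simp add: le_max_iff_disj)
    then show ?thesis using 2 v by (simp add: rounded_def)
  qed (simp add: rounded_def)
qed

lemma vertex_cover:
  assumes v: "v \<in> V - T"
  shows "\<exists>S1 S2. S1 \<in> sets lborel \<and> S2 \<in> sets lborel
     \<and> (\<forall>r\<in>{0<..1/2}. 2 * rounded r v \<le> indicator S1 r + indicator S2 r)
     \<and> emeasure lborel S1 + emeasure lborel S2 \<le> ennreal (d v)"
proof (cases "\<exists>t \<in> T. walks V E t v \<noteq> {}")
  case False
  then have "claims r v = {}" for r using claims_tdist(1) by (auto simp: claims_def)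
  then show ?thesis by (intro exI[of _ "{}"]) (simp add: rounded_def)
next
  case True
  let ?R = "{t \<in> T. walks V E t v \<noteq> {}}"
  obtain t1 where t1: "t1 \<in> T" "walks V E t1 v \<noteq> {}"
    and t1_min: "\<And>t. t \<in> T \<Longrightarrow> walks V E t v \<noteq> {} \<Longrightarrow> tdist t1 v \<le> tdist t v"
    using ex_min_if_finite[of "(\<lambda>t. tdist t v) ` ?R"] finite_T True by (fastforce simp: not_less)
  define a where "a = tdist t1 v - d v"
  define b where "b = max a (1 - d v - a)"
  define S1 where "S1 = {a<..max a (min (a + d v) (1/2))}"
  define S2 where "S2 = {b<..max b (1/2)}"
  have a_nn: "0 \<le> a" using weight_le_tdist[OF v t1(2)] by (simp add: a_def)
  have d_nn: "0 \<le> d v" using d_nonneg[OF v] .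
  have cover: "\<forall>r\<in>{0<..1/2}. 2 * rounded r v \<le> indicator S1 r + indicator S2 r"
    using claims_window[OF v t1 t1_min _ _ a_def b_def] unfolding S1_def S2_def by simp
  have "emeasure lborel S1 + emeasure lborel S2
      = ennreal ((max a (min (a + d v) (1/2)) - a) + (max b (1/2) - b))"
    unfolding S1_def S2_def emeasure_lborel_Ioc[OF max.cobounded1]
    by (rule ennreal_plus[symmetric]) simp_all
  also have "\<dots> \<le> ennreal (d v)"
    using a_nn d_nn unfolding b_def by (intro ennreal_leI) (simp add: max_def min_def)
  finally have small: "emeasure lborel S1 + emeasure lborel S2 \<le> ennreal (d v)" .
  have "S1 \<in> sets lborel" "S2 \<in> sets lborel" by (simp_all add: S1_def S2_def)
  then show ?thesis using cover small by blast
qed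

lemma rounding: "\<exists>f. half_integral V T f \<and> lp_feasible V E T {} f \<and> lp_obj V T f \<le> lp_obj V T d"
proof -
  have "finite ((\<lambda>r. lp_obj V T (rounded r)) ` {0<..1/2})"
  proof (rule finite_subset)
    show "(\<lambda>r. lp_obj V T (rounded r)) ` {0<..1/2} \<subseteq> lp_obj V T ` {f. half_integral V T f}"
      using rounded_half_integral by auto
  qed (use finite_half_integral[OF finite_V] in simp)
  then obtain r where "r \<in> {0<..1/2}" "lp_obj V T (rounded r) \<le> lp_obj V T d"
    using threshold_averaging[of rounded "V - T" d] d_nonneg vertex_cover
    unfolding lp_obj_def by (auto simp: rounded_def)
  then show ?thesis using rounded_half_integral rounded_feasible by auto
qed

end

text \<open>Since there are only finitely many half-integral vectors, the rounding lemma shows that the LP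
  optimum is attained by a half-integral solution.\<close>
lemma (in mwc_graph) half_integral_optimum:
  assumes "lp_feasible V E T {} d"
  obtains f where "half_integral V T f" "lp_feasible V E T {} f" "lp_obj V T f = LP V E T"
proof -
  let ?F = "{f. half_integral V T f \<and> lp_feasible V E T {} f}"
  have rounding: "\<exists>f \<in> ?F. lp_obj V T f \<le> lp_obj V T d'" if "lp_feasible V E T {} d'" for d'
  proof -
    interpret lp_solution V E T d' by unfold_locales (rule that)
    show ?thesis using rounding by blast
  qed
  have "finite (lp_obj V T ` ?F)"
    using finite_half_integral[OF finite_V] by (auto intro: finite_subset)
  moreover have "?F \<noteq> {}" using rounding[OF assms] by blast
  ultimately obtain f where f: "f \<in> ?F" and f_min: "\<And>g. g \<in> ?F \<Longrightarrow> lp_obj V T f \<le> lp_obj V T g"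
    using ex_min_if_finite[of "lp_obj V T ` ?F"] by (fastforce simp: not_less)
  have "LP V E T = lp_obj V T f"
    unfolding LP_def
  proof (rule lp_val_eqI)
    show "lp_feasible V E T {} f" using f by simp
    fix d' assume "lp_feasible V E T {} d'"
    then obtain g where "g \<in> ?F" "lp_obj V T g \<le> lp_obj V T d'" using rounding by blast
    then show "lp_obj V T f \<le> lp_obj V T d'" using f_min by fastforce
  qed
  with f show thesis by (intro that) auto
qed

definition half_ind :: "'a set \<Rightarrow> 'a \<Rightarrow> real" where
  "half_ind A = (\<lambda>v. if v \<in> A then 1/2 else 0)"

lemma lp_obj_half_ind:
  assumes "finite V" "A \<subseteq> V - T"
  shows "lp_obj V T (half_ind A) = real (card A) / 2"
proof -
  have "lp_obj V T (half_ind A) = (\<Sum>v\<in>(V - T) \<inter> A. 1/2)"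
    unfolding lp_obj_def half_ind_def using assms(1) by (simp add: sum.If_cases)
  also have "(V - T) \<inter> A = A" using assms(2) by blast
  finally show ?thesis by simp
qed

lemma half_ind_pair_sum:
  assumes "finite A" "x \<in> A" "y \<in> A" "x \<in> S \<union> B" "y \<in> S \<union> B" "x = y \<Longrightarrow> x \<in> S \<inter> B"
  shows "1 \<le> (\<Sum>v\<in>A. half_ind S v + half_ind B v)"
proof (rule sum_ge_one_two_points[OF assms(1) _ assms(2,3)])
  show "1 \<le> half_ind S x + half_ind B x" if "x = y" using assms(6)[OF that] by (simp add: half_ind_def)
  show "1 \<le> (half_ind S x + half_ind B x) + (half_ind S y + half_ind B y)"
    using assms(4,5) by (auto simp: half_ind_def)
qed (simp add: half_ind_def)

locale reduced_instance = mwc_graph +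
  assumes no_terminal_edges: "\<forall>t\<in>T. \<forall>t'\<in>T. \<not> E t t'"
    and private_nbrs: "\<forall>v\<in>V - T. \<forall>t\<in>T. \<forall>t'\<in>T. E v t \<and> E v t' \<longrightarrow> t = t'"
begin

lemma nbr_terminal: "t \<in> T \<Longrightarrow> nbr E t \<subseteq> V - T"
  using E_in_V no_terminal_edges by (auto simp: nbr_def)

lemma nbr_set_terminals: "nbr_set E T = (\<Union>t\<in>T. nbr E t)"
  using nbr_terminal by (auto simp: nbr_set_def)

lemma nbr_terminal_unique:
  assumes "t \<in> T" "t' \<in> T" "x \<in> nbr E t" "x \<in> nbr E t'"
  shows "t = t'"
proof -
  have "x \<in> V - T" using nbr_terminal assms(1,3) by blast
  moreover have "E x t" "E x t'" using assms(3,4) E_sym by (simp_all add: nbr_def)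
  ultimately show ?thesis using private_nbrs assms(1,2) by blast
qed

lemma nbr_set_sub: "nbr_set E T \<subseteq> V - T"
  using nbr_terminal by (auto simp: nbr_set_terminals)

lemma term_path_end_nbrs:
  assumes P: "P \<in> term_paths V E T"
  obtains x y where "x \<in> set P - T" "y \<in> set P - T" "x \<in> nbr E (hd P)" "y \<in> nbr E (last P)" "x \<noteq> y"
proof -
  have ends: "hd P \<in> T" "last P \<in> T" "hd P \<noteq> last P" using P by (auto simp: term_paths_iff)
  obtain x where x: "x \<in> set P" "E (hd P) x" using term_path_second_vertex[OF P] by blast
  obtain y where y: "y \<in> set P" "E (last P) y"
    using term_path_second_vertex[OF term_paths_rev[OF P]] by (auto simp: hd_rev)
  have "x \<in> nbr E (hd P)" "y \<in> nbr E (last P)" using x y by (simp_all add: nbr_def)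
  moreover have "x \<notin> T" "y \<notin> T" using x y ends no_terminal_edges by blast+
  moreover have "x \<noteq> y" using nbr_terminal_unique[of "hd P" "last P"] ends calculation(1,2) by blast
  ultimately show thesis using that x(1) y(1) by blast
qed

lemma half_nbrs_feasible: "lp_feasible V E T {} (half_ind (nbr_set E T))"
  unfolding lp_feasible_def
proof (intro conjI ballI)
  fix P assume P: "P \<in> term_paths V E T"
  have ends: "hd P \<in> T" "last P \<in> T" using P by (auto simp: term_paths_iff)
  obtain x y where xy: "x \<in> set P - T" "y \<in> set P - T" "x \<in> nbr E (hd P)" "y \<in> nbr E (last P)" "x \<noteq> y"
    using term_path_end_nbrs[OF P] .
  then have "x \<in> nbr_set E T" "y \<in> nbr_set E T" using ends by (auto simp: nbr_set_terminals)
  then show "1 \<le> (\<Sum>v\<in>set P - T. half_ind (nbr_set E T) v)"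
    using xy by (intro sum_ge_one_two_points[of _ _ x y]) (auto simp: half_ind_def)
qed (auto simp: half_ind_def)

definition other_nbrs :: "'a \<Rightarrow> 'a set" where
  "other_nbrs t = (\<Union>t'\<in>T - {t}. nbr E t')"

lemma other_nbrs_sub: "other_nbrs t \<subseteq> V - T"
  using nbr_terminal by (auto simp: other_nbrs_def)

lemma nbr_other_nbrs_disjoint: "t \<in> T \<Longrightarrow> nbr E t \<inter> other_nbrs t = {}"
  using nbr_terminal_unique by (fastforce simp: other_nbrs_def)

lemma card_nbr_set_split:
  assumes t: "t \<in> T"
  shows "card (nbr_set E T) = card (nbr E t) + card (other_nbrs t)"
proof -
  have "nbr_set E T = nbr E t \<union> other_nbrs t"
    using t by (auto simp: nbr_set_terminals other_nbrs_def)
  moreover have "finite (nbr E t)" "finite (other_nbrs t)"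
    using nbr_terminal[OF t] other_nbrs_sub finite_V by (auto intro: finite_subset)
  ultimately show ?thesis using card_Un_disjoint nbr_other_nbrs_disjoint[OF t] by simp
qed

lemma nbr_separating_cut: "t \<in> T \<Longrightarrow> separating_cut V E T t (nbr E t)"
  unfolding separating_cut_def
proof (intro conjI ballI notI)
  fix t' assume "t \<in> T" "t' \<in> T - {t}" and conn: "connected_in V E (nbr E t) t t'"
  let ?R = "\<lambda>x y. E x y \<and> x \<in> V - nbr E t \<and> y \<in> V - nbr E t"
  have "?R\<^sup>*\<^sup>* t z \<Longrightarrow> z = t" for z
    by (induction rule: rtranclp_induct) (auto simp: nbr_def)
  then show False using conn \<open>t' \<in> T - {t}\<close> by (auto simp: connected_in_def)
qed (use nbr_terminal in blast)

text \<open>Replacing \<open>N(t)\<close> by an arbitrary separating cut \<open>S\<close> of \<open>t\<close> keeps feasibility: a path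
  starting at \<open>t\<close> meets \<open>S\<close> and a neighbour of its other end, and any other path meets
  neighbours of two distinct terminals different from \<open>t\<close>.\<close>
lemma cut_feasible:
  assumes t: "t \<in> T" and S: "separating_cut V E T t S"
  shows "lp_feasible V E T {} (\<lambda>v. half_ind S v + half_ind (other_nbrs t) v)"
    (is "lp_feasible V E T {} ?d")
proof -
  have S_sub: "S \<subseteq> V - T" using S by (simp add: separating_cut_def)
  have from_t: "1 \<le> (\<Sum>v\<in>set P - T. ?d v)" if P: "P \<in> term_paths V E T" "hd P = t" for P
  proof -
    obtain z where z: "z \<in> set P" "z \<in> S" using separating_cut_meets_path[OF S P] by blast
    obtain y where xy: "y \<in> set P - T" "y \<in> nbr E (last P)"
      using term_path_end_nbrs[OF P(1)] by metis
    have "last P \<in> T - {t}" using P by (auto simp: term_paths_iff)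
    then have "y \<in> other_nbrs t" using xy by (auto simp: other_nbrs_def)
    then show ?thesis using z xy S_sub by (intro half_ind_pair_sum[of _ z y]) auto
  qed
  show ?thesis
    unfolding lp_feasible_def
  proof (intro conjI ballI)
    fix P assume P: "P \<in> term_paths V E T"
    consider "hd P = t" | "last P = t" | "hd P \<noteq> t" "last P \<noteq> t" by blast
    then show "1 \<le> (\<Sum>v\<in>set P - T. ?d v)"
    proof cases
      case 2
      then show ?thesis using from_t[OF term_paths_rev[OF P]] by (simp add: hd_rev)
    next
      case 3
      obtain x y where xy: "x \<in> set P - T" "y \<in> set P - T" "x \<in> nbr E (hd P)" "y \<in> nbr E (last P)" "x \<noteq> y"
        using term_path_end_nbrs[OF P] .
      moreover have "hd P \<in> T - {t}" "last P \<in> T - {t}" using P 3 by (auto simp: term_paths_iff)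
      ultimately have "x \<in> other_nbrs t" "y \<in> other_nbrs t" by (auto simp: other_nbrs_def)
      then show ?thesis using xy by (intro half_ind_pair_sum[of _ x y]) auto
    qed (use from_t P in blast)
  qed (auto simp: half_ind_def)
qed

end

locale strict_instance = reduced_instance +
  assumes lp_increases: "\<forall>t\<in>T. \<forall>w\<in>nbr E t - T. lp_val V E T {w} > LP V E T"
begin

lemma optimal_positive_on_nbrs:
  assumes f: "lp_feasible V E T {} f" "lp_obj V T f \<le> LP V E T" and w: "w \<in> nbr_set E T"
  shows "f w \<noteq> 0"
proof
  assume "f w = 0"
  then have "lp_feasible V E T {w} f" using f(1) by (simp add: lp_feasible_def)
  then have "lp_val V E T {w} \<le> LP V E T" using lp_val_le f(2) by fastforce
  moreover obtain t where "t \<in> T" "w \<in> nbr E t - T"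
    using w nbr_terminal by (auto simp: nbr_set_terminals)
  then have "LP V E T < lp_val V E T {w}" using lp_increases by blast
  ultimately show False by simp
qed

text \<open>Part (1): a half-integral optimum is \<open>\<ge> 1/2\<close> on \<open>N(T)\<close>, so it costs at least \<open>|N(T)|/2\<close>.\<close>
lemma LP_half_nbrs: "LP V E T = real (card (nbr_set E T)) / 2"
proof (rule antisym)
  let ?N = "nbr_set E T"
  note N_sub = nbr_set_sub
  show "LP V E T \<le> real (card ?N) / 2"
    using lp_val_le[OF half_nbrs_feasible] lp_obj_half_ind[OF finite_V N_sub] by (simp add: LP_def)
  obtain f where f: "half_integral V T f" "lp_feasible V E T {} f" "lp_obj V T f = LP V E T"
    using half_integral_optimum[OF half_nbrs_feasible] .
  have half: "1/2 \<le> f w" if "w \<in> ?N" for w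
    using optimal_positive_on_nbrs[OF f(2) _ that] f(1,3) that N_sub by (force simp: half_integral_def)
  have f_nn: "0 \<le> f v" if "v \<in> V - T" for v using f(2) that by (simp add: lp_feasible_def)
  have "real (card ?N) / 2 = (\<Sum>w\<in>?N. 1/2)" by simp
  also have "\<dots> \<le> (\<Sum>w\<in>?N. f w)" using half by (rule sum_mono)
  also have "\<dots> \<le> lp_obj V T f"
    unfolding lp_obj_def using N_sub f_nn finite_V by (intro sum_mono2) auto
  finally show "real (card ?N) / 2 \<le> LP V E T" using f(3) by simp
qed

lemma half_nbrs_optimal: "lp_optimal V E T (half_ind (nbr_set E T))"
  unfolding lp_optimal_def
  using half_nbrs_feasible LP_half_nbrs lp_obj_half_ind[OF finite_V nbr_set_sub] by simp

text \<open>Part (2): a different separating cut no larger than \<open>N(t)\<close> misses some \<open>w \<in> N(t)\<close> and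
  yields, via \<open>cut_feasible\<close>, an optimal solution vanishing at \<open>w\<close>.\<close>
lemma nbr_unique_min_cut:
  assumes t: "t \<in> T"
  shows "unique_min_separating_cut V E T t (nbr E t)"
  unfolding unique_min_separating_cut_def
proof (intro conjI allI impI nbr_separating_cut[OF t])
  fix S assume S: "separating_cut V E T t S \<and> card S \<le> card (nbr E t)"
  have S_sub: "S \<subseteq> V - T" using S by (simp add: separating_cut_def)
  show "S = nbr E t"
  proof (rule ccontr)
    assume "S \<noteq> nbr E t"
    moreover have "finite S" using S_sub finite_V finite_subset by blast
    ultimately obtain w where w: "w \<in> nbr E t" "w \<notin> S"
      using not_superset_if_card_le S by blast
    let ?d = "\<lambda>v. half_ind S v + half_ind (other_nbrs t) v"
    have "lp_obj V T ?d = lp_obj V T (half_ind S) + lp_obj V T (half_ind (other_nbrs t))"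
      by (simp add: lp_obj_def sum.distrib)
    also have "\<dots> \<le> real (card (nbr_set E T)) / 2"
      using lp_obj_half_ind[OF finite_V S_sub] lp_obj_half_ind[OF finite_V other_nbrs_sub]
        S card_nbr_set_split[OF t] by simp
    finally have "lp_obj V T ?d \<le> LP V E T" using LP_half_nbrs by simp
    moreover have "w \<in> nbr_set E T" using w t by (auto simp: nbr_set_terminals)
    ultimately have "?d w \<noteq> 0"
      using optimal_positive_on_nbrs[OF cut_feasible[OF t conjunct1[OF S]]] by blast
    moreover have "w \<notin> other_nbrs t" using w nbr_other_nbrs_disjoint[OF t] by blast
    ultimately show False using w by (simp add: half_ind_def)
  qed
qed

end

theorem mainTheorem3:
  fixes V :: "'a set" and E :: "'a \<Rightarrow> 'a \<Rightarrow> bool" and T :: "'a set" and k :: int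
  assumes graph: "simple_graph V E"
    and TV: "T \<subseteq> V"
    and R1a: "\<forall>t\<in>T. \<forall>t'\<in>T. \<not> E t t'"
    and R1b: "pI V E T k \<ge> 0"
    and R2: "\<forall>v\<in>V - T. \<forall>t\<in>T. \<forall>t'\<in>T. E v t \<and> E v t' \<longrightarrow> t = t'"
    and R3: "\<forall>t\<in>T. \<forall>w\<in>nbr E t - T. lp_val V E T {w} > LP V E T"
  shows "lp_optimal V E T (\<lambda>v. if v \<in> nbr_set E T then 1/2 else 0)
     \<and> (\<forall>t\<in>T. unique_min_separating_cut V E T t (nbr E t))"
proof -
  interpret strict_instance V E T
    by unfold_locales (fact graph TV R1a R2 R3)+
  show ?thesis using half_nbrs_optimal nbr_unique_min_cut unfolding half_ind_def by blast
qed

end
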